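(* Let $\Theta$ be a space of input histories. Every input history $h\in\Theta$ has at least one tip event, i.e. $\mathrm{tips}_\Theta(h)\neq\emptyset$; and every extended input history $h\in\mathrm{Ext}(\Theta)$ with $h\notin\Theta$ has no tip events, i.e. $\mathrm{tips}_\Theta(h)=\emptyset$.
   Context: A partial function is a function $f$ with domain $\mathrm{dom}(f)$ a subset of an index set, values in given sets; ordered by restriction ($f\le g$ iff $\mathrm{dom}(f)\subseteq\mathrm{dom}(g)$, $g|_{\mathrm{dom}(f)}=f$). Compatible = agreeing on common domain; a compatible set $\mathcal F$ has join $\bigvee\mathcal F$ (union). $\Theta$ is $\vee$-prime if for compatible $\mathcal F\subseteq\Theta$ with $\bigvee\mathcal F\in\Theta$ we have $\bigvee\mathcal F\in\mathcal F$. A space of input histories is a finite $\vee$-prime set of partial functions; $\mathrm{Ext}(\Theta)=\{\bigvee\mathcal F:\emptyset\ne\mathcal F\subseteq\Theta\text{ compatible}\}$. For $h\in\mathrm{Ext}(\Theta)$, $\mathrm{tips}_\Theta(h)=\mathrm{dom}(h)\setminus\bigcup\{\mathrm{dom}(k):k\in\mathrm{Ext}(\Theta),k<h\}$. *)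

theory Defs
  imports Main
begin

definition pf_less :: "('i \<rightharpoonup> 'v) \<Rightarrow> ('i \<rightharpoonup> 'v) \<Rightarrow> bool" where
  "pf_less f g \<longleftrightarrow> f \<subseteq>\<^sub>m g \<and> f \<noteq> g"

definition compatible :: "('i \<rightharpoonup> 'v) set \<Rightarrow> bool" where
  "compatible F \<longleftrightarrow> (\<forall>f\<in>F. \<forall>g\<in>F. \<forall>i\<in>dom f \<inter> dom g. f i = g i)"

text \<open>Join (union) of a set of partial functions; meaningful for compatible sets.\<close>
definition pf_join :: "('i \<rightharpoonup> 'v) set \<Rightarrow> ('i \<rightharpoonup> 'v)" where
  "pf_join F = (\<lambda>i. if \<exists>f\<in>F. i \<in> dom f then Some (SOME y. \<exists>f\<in>F. f i = Some y) else None)"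

definition join_prime :: "('i \<rightharpoonup> 'v) set \<Rightarrow> bool" where
  "join_prime \<Theta> \<longleftrightarrow>
     (\<forall>F. F \<subseteq> \<Theta> \<and> compatible F \<and> pf_join F \<in> \<Theta> \<longrightarrow> pf_join F \<in> F)"

definition input_history_space :: "('i \<rightharpoonup> 'v) set \<Rightarrow> bool" where
  "input_history_space \<Theta> \<longleftrightarrow> finite \<Theta> \<and> join_prime \<Theta>"

definition Ext :: "('i \<rightharpoonup> 'v) set \<Rightarrow> ('i \<rightharpoonup> 'v) set" where
  "Ext \<Theta> = {pf_join F | F. F \<noteq> {} \<and> F \<subseteq> \<Theta> \<and> compatible F}"

definition tips :: "('i \<rightharpoonup> 'v) set \<Rightarrow> ('i \<rightharpoonup> 'v) \<Rightarrow> 'i set" where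
  "tips \<Theta> h = dom h - \<Union>{dom k | k. k \<in> Ext \<Theta> \<and> pf_less k h}"

end

theory Submission
  imports Defs
begin

text \<open>Tips can be computed from \<Theta> alone: every history in Ext \<Theta> strictly below h is
covered by elements of \<Theta> that are themselves strictly below h. If h \<in> \<Theta> had no tip, h
would be the join of the elements of \<Theta> strictly below it, contradicting \<or>-primality. If
h = \<Or>F \<in> Ext \<Theta> is not in \<Theta>, every member of F is strictly below h, so the members of
F cover the whole domain of h.\<close>

lemma pf_join_eq_Some:
  assumes "compatible F" and "f \<in> F" and "f i = Some y"
  shows "pf_join F i = Some y"
proof -
  have "(SOME z. \<exists>g\<in>F. g i = Some z) = y"
  proof (rule some_equality)
    show "\<exists>g\<in>F. g i = Some y" using assms by blast
  next
    fix z assume "\<exists>g\<in>F. g i = Some z"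
    with assms show "z = y" unfolding compatible_def by (metis IntI domI option.inject)
  qed
  moreover have "\<exists>g\<in>F. i \<in> dom g" using assms by blast
  ultimately show ?thesis unfolding pf_join_def by simp
qed

lemma dom_pf_join: "dom (pf_join F) = \<Union>(dom ` F)"
  unfolding pf_join_def dom_def by auto

lemma map_le_pf_join: "compatible F \<Longrightarrow> f \<in> F \<Longrightarrow> f \<subseteq>\<^sub>m pf_join F"
  unfolding map_le_def by (metis domD pf_join_eq_Some)

lemma compatible_if_map_le: "(\<And>f. f \<in> F \<Longrightarrow> f \<subseteq>\<^sub>m h) \<Longrightarrow> compatible F"
  unfolding compatible_def map_le_def by (metis IntE)

lemma compatible_singleton: "compatible {f}"
  unfolding compatible_def by simp

lemma pf_join_singleton: "pf_join {f} = f"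
proof
  fix i show "pf_join {f} i = f i"
    by (cases "f i") (simp_all add: pf_join_eq_Some compatible_singleton pf_join_def domIff)
qed

lemma pf_join_eq_if_map_le_cover:
  assumes le: "\<And>f. f \<in> F \<Longrightarrow> f \<subseteq>\<^sub>m h" and cover: "dom h \<subseteq> \<Union>(dom ` F)"
  shows "pf_join F = h"
proof (rule map_le_antisym)
  have compat: "compatible F" using le by (rule compatible_if_map_le)
  show "pf_join F \<subseteq>\<^sub>m h"
    unfolding map_le_def
  proof
    fix i assume "i \<in> dom (pf_join F)"
    then obtain f y where "f \<in> F" "f i = Some y" by (auto simp: dom_pf_join)
    then show "pf_join F i = h i"
      using compat le pf_join_eq_Some map_le_def by (metis domI)
  qed
  then show "h \<subseteq>\<^sub>m pf_join F"
    using cover unfolding map_le_def dom_pf_join by (metis domIff subsetD)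
qed

lemma pf_less_if_map_le_pf_less: "g \<subseteq>\<^sub>m k \<Longrightarrow> pf_less k h \<Longrightarrow> pf_less g h"
  unfolding pf_less_def by (metis map_le_antisym map_le_trans)

lemma pf_less_pf_join:
  "compatible F \<Longrightarrow> f \<in> F \<Longrightarrow> f \<noteq> pf_join F \<Longrightarrow> pf_less f (pf_join F)"
  unfolding pf_less_def by (simp add: map_le_pf_join)

lemma subset_Ext: "\<Theta> \<subseteq> Ext \<Theta>"
proof
  fix f assume "f \<in> \<Theta>"
  then show "f \<in> Ext \<Theta>"
    unfolding Ext_def
    by (intro CollectI exI[of _ "{f}"]) (simp add: pf_join_singleton compatible_singleton)
qed

lemma Ext_dom_covered:
  assumes "k \<in> Ext \<Theta>" and "i \<in> dom k"
  obtains g where "g \<in> \<Theta>" "g \<subseteq>\<^sub>m k" "i \<in> dom g"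
proof -
  obtain F where F: "k = pf_join F" "F \<subseteq> \<Theta>" "compatible F"
    using assms(1) unfolding Ext_def by blast
  then obtain g where "g \<in> F" "i \<in> dom g"
    using assms(2) by (auto simp: dom_pf_join)
  with F show thesis using that map_le_pf_join by blast
qed

lemma tips_eq_dom_diff_smaller:
  "tips \<Theta> h = dom h - \<Union>(dom ` {g \<in> \<Theta>. pf_less g h})"
proof -
  have "\<Union>{dom k | k. k \<in> Ext \<Theta> \<and> pf_less k h} = \<Union>(dom ` {g \<in> \<Theta>. pf_less g h})"
  proof (rule antisym)
    show "\<Union>{dom k | k. k \<in> Ext \<Theta> \<and> pf_less k h} \<subseteq> \<Union>(dom ` {g \<in> \<Theta>. pf_less g h})"
    proof
      fix i assume "i \<in> \<Union>{dom k | k. k \<in> Ext \<Theta> \<and> pf_less k h}"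
      then obtain k where k: "k \<in> Ext \<Theta>" "pf_less k h" "i \<in> dom k" by blast
      obtain g where "g \<in> \<Theta>" "g \<subseteq>\<^sub>m k" "i \<in> dom g"
        using Ext_dom_covered[OF k(1) k(3)] by blast
      with k show "i \<in> \<Union>(dom ` {g \<in> \<Theta>. pf_less g h})"
        using pf_less_if_map_le_pf_less by blast
    qed
    show "\<Union>(dom ` {g \<in> \<Theta>. pf_less g h}) \<subseteq> \<Union>{dom k | k. k \<in> Ext \<Theta> \<and> pf_less k h}"
      using subset_Ext by blast
  qed
  then show ?thesis unfolding tips_def by simp
qed

lemma tips_nonempty:
  assumes "join_prime \<Theta>" and "h \<in> \<Theta>"
  shows "tips \<Theta> h \<noteq> {}"
proof
  assume "tips \<Theta> h = {}"
  define F where "F = {g \<in> \<Theta>. pf_less g h}"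
  have below: "\<And>g. g \<in> F \<Longrightarrow> g \<subseteq>\<^sub>m h" unfolding F_def pf_less_def by blast
  have "dom h \<subseteq> \<Union>(dom ` F)"
    using \<open>tips \<Theta> h = {}\<close> unfolding tips_eq_dom_diff_smaller F_def by blast
  with below have join: "pf_join F = h" by (rule pf_join_eq_if_map_le_cover)
  have "F \<subseteq> \<Theta>" unfolding F_def by blast
  moreover have "compatible F" using below by (rule compatible_if_map_le)
  ultimately have "h \<in> F" using assms join unfolding join_prime_def by metis
  then show False unfolding F_def pf_less_def by blast
qed

lemma tips_Ext_empty_if_notin:
  assumes "h \<in> Ext \<Theta>" and "h \<notin> \<Theta>"
  shows "tips \<Theta> h = {}"
proof -
  obtain F where F: "h = pf_join F" "F \<subseteq> \<Theta>" "compatible F"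
    using assms(1) unfolding Ext_def by blast
  have "F \<subseteq> {g \<in> \<Theta>. pf_less g h}"
    using F assms(2) pf_less_pf_join by blast
  then have "dom h \<subseteq> \<Union>(dom ` {g \<in> \<Theta>. pf_less g h})"
    unfolding F(1) dom_pf_join by blast
  then show ?thesis by (simp add: tips_eq_dom_diff_smaller)
qed

theorem proposition15:
  fixes \<Theta> :: "('i \<rightharpoonup> 'v) set"
  assumes "input_history_space \<Theta>"
  shows "(\<forall>h\<in>\<Theta>. tips \<Theta> h \<noteq> {}) \<and> (\<forall>h\<in>Ext \<Theta>. h \<notin> \<Theta> \<longrightarrow> tips \<Theta> h = {})"
  using assms tips_nonempty tips_Ext_empty_if_notin
  unfolding input_history_space_def by blast

end
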